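(* Let $0\le s\le w\le n$ and let $T$ be a family of distinct $w$-subsets of $[n]$ such that every two members of $T$ intersect in at least $s$ elements, and $T$ has the maximum possible cardinality among all such families. For $q\ge 2$ let $A_q$ be the set of all $|T|(q-1)^w$ words of $\mathbb{Z}_q^n$ whose support belongs to $T$. Then: (1) $A_2$ is a maximum anticode of diameter $2w-2s$ in $J_2(n,w)$; (2) for all sufficiently large $q$, $A_q$ is a maximum anticode of diameter $2w-s$ in $J_q(n,w)$; (3) if $C_q\subseteq J_q(n,w)$ is a code with minimum distance at least $2w-s+1$ and $|C_q|=|J_q(n,w)|/|A_q|$, then the binary code $C_2$ obtained from $C_q$ by replacing every nonzero symbol in every codeword by $1$ satisfies $|C_2|=|J_2(n,w)|/|A_2|$ and has minimum distance at least $2w-2s+2$ (so $C_2$ is a diameter perfect code in $J_2(n,w)$).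
   Context: $\mathbb{Z}_q=\{0,1,\dots,q-1\}$ is used merely as an alphabet; $[n]=\{1,\dots,n\}$. For $x\in\mathbb{Z}_q^n$, $\mathrm{supp}(x)=\{i: x_i\ne0\}$, $\mathrm{wt}(x)=|\mathrm{supp}(x)|$; $d(x,y)$ is the Hamming distance. $J_q(n,w)$ is the set of weight-$w$ words in $\mathbb{Z}_q^n$ with the Hamming metric. An anticode of diameter $D$ is a nonempty subset with all pairwise distances at most $D$; it is maximum if it has largest cardinality among such. A code of distance $d$ in $J_q(n,w)$ is a subset with at least two elements and pairwise distances at least $d$; it is diameter perfect if $|C|\cdot|A|=|J_q(n,w)|$ for some anticode $A$ of diameter less than $d$. *)

theory Defs
  imports Complex_Main "HOL-Library.FuncSet"
begin

text \<open>Words of Z_q^n: functions on the index set [n] = {1..n} with values in {0..q-1}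
  (extensional: undefined outside [n]).\<close>
definition words :: "nat \<Rightarrow> nat \<Rightarrow> (nat \<Rightarrow> nat) set" where
  "words q n = ({1..n} \<rightarrow>\<^sub>E {..<q})"

definition supp :: "nat \<Rightarrow> (nat \<Rightarrow> nat) \<Rightarrow> nat set" where
  "supp n x = {i \<in> {1..n}. x i \<noteq> 0}"

definition wt :: "nat \<Rightarrow> (nat \<Rightarrow> nat) \<Rightarrow> nat" where
  "wt n x = card (supp n x)"

definition hdist :: "nat \<Rightarrow> (nat \<Rightarrow> nat) \<Rightarrow> (nat \<Rightarrow> nat) \<Rightarrow> nat" where
  "hdist n x y = card {i \<in> {1..n}. x i \<noteq> y i}"

definition J :: "nat \<Rightarrow> nat \<Rightarrow> nat \<Rightarrow> (nat \<Rightarrow> nat) set" where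
  "J q n w = {x \<in> words q n. wt n x = w}"

definition anticode :: "nat \<Rightarrow> nat \<Rightarrow> nat \<Rightarrow> nat \<Rightarrow> (nat \<Rightarrow> nat) set \<Rightarrow> bool" where
  "anticode q n w D A \<longleftrightarrow> A \<subseteq> J q n w \<and> A \<noteq> {} \<and> (\<forall>x\<in>A. \<forall>y\<in>A. hdist n x y \<le> D)"

definition max_anticode :: "nat \<Rightarrow> nat \<Rightarrow> nat \<Rightarrow> nat \<Rightarrow> (nat \<Rightarrow> nat) set \<Rightarrow> bool" where
  "max_anticode q n w D A \<longleftrightarrow> anticode q n w D A \<and>
     (\<forall>B. anticode q n w D B \<longrightarrow> card B \<le> card A)"

definition code :: "nat \<Rightarrow> nat \<Rightarrow> nat \<Rightarrow> nat \<Rightarrow> (nat \<Rightarrow> nat) set \<Rightarrow> bool" where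
  "code q n w d C \<longleftrightarrow> C \<subseteq> J q n w \<and> 2 \<le> card C \<and>
     (\<forall>x\<in>C. \<forall>y\<in>C. x \<noteq> y \<longrightarrow> d \<le> hdist n x y)"

definition diameter_perfect :: "nat \<Rightarrow> nat \<Rightarrow> nat \<Rightarrow> nat \<Rightarrow> (nat \<Rightarrow> nat) set \<Rightarrow> bool" where
  "diameter_perfect q n w d C \<longleftrightarrow> code q n w d C \<and>
     (\<exists>A D. D < d \<and> anticode q n w D A \<and> card C * card A = card (J q n w))"

definition s_intersecting :: "nat \<Rightarrow> nat \<Rightarrow> nat \<Rightarrow> nat set set \<Rightarrow> bool" where
  "s_intersecting n w s T \<longleftrightarrow> (\<forall>S\<in>T. S \<subseteq> {1..n} \<and> card S = w) \<and>
     (\<forall>S1\<in>T. \<forall>S2\<in>T. s \<le> card (S1 \<inter> S2))"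

definition max_s_intersecting :: "nat \<Rightarrow> nat \<Rightarrow> nat \<Rightarrow> nat set set \<Rightarrow> bool" where
  "max_s_intersecting n w s T \<longleftrightarrow> s_intersecting n w s T \<and>
     (\<forall>T'. s_intersecting n w s T' \<longrightarrow> card T' \<le> card T)"

definition Aq :: "nat \<Rightarrow> nat \<Rightarrow> nat set set \<Rightarrow> (nat \<Rightarrow> nat) set" where
  "Aq q n T = {x \<in> words q n. supp n x \<in> T}"

definition binarize :: "nat \<Rightarrow> (nat \<Rightarrow> nat) \<Rightarrow> (nat \<Rightarrow> nat)" where
  "binarize n x = restrict (\<lambda>i. if x i = 0 then 0 else 1) {1..n}"

end

theory Submission
  imports Defs
begin

text \<open>
  A support S of size w carries exactly (q-1)^w words, so
  |A_q| = |T| (q-1)^w and |J_q(n,w)| = binom n w (q-1)^w. For q = 2 a word is its support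
  and d(x,y) = 2w - 2|supp x \<inter> supp y|, so binary anticodes of diameter 2w-2s are exactly
  s-intersecting families. For general q, d(x,y) \<le> 2w - |supp x \<inter> supp y| with equality
  when x and y disagree on every common support position. Hence, in an anticode B of diameter
  2w-s, the supports that s-intersect all others form an s-intersecting family (at most |T|
  of them), while a support S meeting some other support y in fewer than s places carries
  only words agreeing with y somewhere on S, at most w (q-1)^(w-1) of them. If one support of
  the second kind exists, the first kind has at most |T|-1 members, and for large q all
  supports of the second kind together carry at most (q-1)^w words.
  For part (3), the code distance 2w-s+1 forces |supp x \<inter> supp y| < s, so binarizing is
  injective and yields binary distance at least 2w-2s+2, and the size ratio
  |J_q(n,w)|/|A_q| = binom n w/|T| does not depend on q.
\<close>

definition words_with_supp :: "nat \<Rightarrow> nat \<Rightarrow> nat set \<Rightarrow> (nat \<Rightarrow> nat) set" where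
  "words_with_supp q n S = {x \<in> words q n. supp n x = S}"

definition subsets_of_card :: "nat \<Rightarrow> nat \<Rightarrow> nat set set" where
  "subsets_of_card n w = {S. S \<subseteq> {1..n} \<and> card S = w}"

lemma finite_words [simp]: "finite (words q n)"
  by (simp add: words_def finite_PiE)

lemma supp_subset: "supp n x \<subseteq> {1..n}"
  by (auto simp: supp_def)

lemma finite_supp [simp]: "finite (supp n x)"
  using supp_subset finite_subset by blast

lemma finite_words_with_supp [simp]: "finite (words_with_supp q n S)"
  by (simp add: words_with_supp_def)

lemma finite_subsets_of_card [simp]: "finite (subsets_of_card n w)"
  by (rule finite_subset[of _ "Pow {1..n}"]) (auto simp: subsets_of_card_def)

subsection \<open>Counting words by support\<close>

lemma words_with_supp_eq_PiE:
  assumes "S \<subseteq> {1..n}" "0 < q"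
  shows "words_with_supp q n S = PiE {1..n} (\<lambda>i. if i \<in> S then {1..<q} else {0})"
proof -
  have coord: "x i \<in> (if i \<in> S then {1..<q} else {0}) \<longleftrightarrow> x i \<in> {..<q} \<and> (x i \<noteq> 0 \<longleftrightarrow> i \<in> S)"
    for x :: "nat \<Rightarrow> nat" and i
    using assms(2) by auto
  have "x \<in> words_with_supp q n S \<longleftrightarrow> x \<in> PiE {1..n} (\<lambda>i. if i \<in> S then {1..<q} else {0})" for x
    unfolding words_with_supp_def words_def supp_def PiE_iff coord using assms(1) by blast
  then show ?thesis by blast
qed

lemma card_words_with_supp:
  assumes "S \<subseteq> {1..n}" "0 < q"
  shows "card (words_with_supp q n S) = (q-1) ^ card S"
proof -
  have "card (words_with_supp q n S) = (\<Prod>i\<in>{1..n}. card (if i \<in> S then {1..<q} else {0}))"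
    by (simp add: words_with_supp_eq_PiE[OF assms] card_PiE)
  also have "\<dots> = (\<Prod>i\<in>{1..n}. if i \<in> S then q-1 else 1)"
    by (rule prod.cong) auto
  also have "\<dots> = (\<Prod>i\<in>{1..n} \<inter> S. q-1)"
    by (rule prod.inter_restrict[symmetric]) simp
  also have "\<dots> = (q-1) ^ card S"
    using assms(1) by (simp add: Int_absorb1)
  finally show ?thesis .
qed

lemma card_words_with_supp_fixed_coord:
  assumes "S \<subseteq> {1..n}" "0 < q" "i \<in> S"
  shows "card {x \<in> words_with_supp q n S. x i = c} \<le> (q-1) ^ (card S - 1)"
proof -
  let ?F = "\<lambda>j. if j \<in> S - {i} then {1..<q} else if j = i then {c} else {0}"
  have "x \<in> PiE {1..n} ?F" if "x \<in> words_with_supp q n S" "x i = c" for x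
    using that unfolding words_with_supp_eq_PiE[OF assms(1,2)] PiE_iff
    by (simp split: if_splits) blast
  then have "{x \<in> words_with_supp q n S. x i = c} \<subseteq> PiE {1..n} ?F" by blast
  then have "card {x \<in> words_with_supp q n S. x i = c} \<le> card (PiE {1..n} ?F)"
    by (rule card_mono[rotated]) (simp add: finite_PiE)
  also have "\<dots> = (\<Prod>j\<in>{1..n}. if j \<in> S - {i} then q-1 else 1)"
    by (simp add: card_PiE) (rule prod.cong; auto)
  also have "\<dots> = (\<Prod>j\<in>{1..n} \<inter> (S - {i}). q-1)"
    by (rule prod.inter_restrict[symmetric]) simp
  also have "\<dots> = (q-1) ^ (card S - 1)"
    using assms by (simp add: Int_absorb1 Diff_subset[THEN subset_trans])
  finally show ?thesis .
qed

lemma card_words_with_supp_agreeing: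
  assumes "S \<subseteq> {1..n}" "0 < q"
  shows "card {x \<in> words_with_supp q n S. \<exists>i\<in>S. x i = y i} \<le> card S * (q-1) ^ (card S - 1)"
proof -
  have "finite S" using finite_subset[OF assms(1)] by simp
  have "{x \<in> words_with_supp q n S. \<exists>i\<in>S. x i = y i}
      = (\<Union>i\<in>S. {x \<in> words_with_supp q n S. x i = y i})"
    by blast
  also have "card \<dots> \<le> (\<Sum>i\<in>S. card {x \<in> words_with_supp q n S. x i = y i})"
    using \<open>finite S\<close> by (rule card_UN_le)
  also have "\<dots> \<le> (\<Sum>i\<in>S. (q-1) ^ (card S - 1))"
    by (rule sum_mono) (rule card_words_with_supp_fixed_coord[OF assms])
  finally show ?thesis by simp
qed

lemma card_UN_words_with_supp:
  assumes "finite F" "F \<subseteq> subsets_of_card n w" "0 < q"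
  shows "card (\<Union>S\<in>F. words_with_supp q n S) = card F * (q-1) ^ w"
proof -
  have "card (\<Union>S\<in>F. words_with_supp q n S) = (\<Sum>S\<in>F. card (words_with_supp q n S))"
    using assms(1) by (rule card_UN_disjoint) (auto simp: words_with_supp_def)
  also have "\<dots> = (\<Sum>S\<in>F. (q-1) ^ w)"
    using assms card_words_with_supp by (intro sum.cong) (auto simp: subsets_of_card_def)
  finally show ?thesis by simp
qed

lemma Aq_eq_UN: "Aq q n T = (\<Union>S\<in>T. words_with_supp q n S)"
  by (auto simp: Aq_def words_with_supp_def)

lemma J_eq_UN: "J q n w = (\<Union>S\<in>subsets_of_card n w. words_with_supp q n S)"
  using supp_subset by (auto simp: J_def wt_def words_with_supp_def subsets_of_card_def)

lemma card_Aq: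
  "finite T \<Longrightarrow> T \<subseteq> subsets_of_card n w \<Longrightarrow> 0 < q \<Longrightarrow> card (Aq q n T) = card T * (q-1) ^ w"
  unfolding Aq_eq_UN by (rule card_UN_words_with_supp)

lemma card_J: "0 < q \<Longrightarrow> card (J q n w) = card (subsets_of_card n w) * (q-1) ^ w"
  unfolding J_eq_UN by (rule card_UN_words_with_supp) auto

lemma card_J_div_card_Aq:
  assumes "finite T" "T \<subseteq> subsets_of_card n w" "2 \<le> q"
  shows "real (card (J q n w)) / real (card (Aq q n T)) = real (card (subsets_of_card n w)) / real (card T)"
  using assms by (simp add: card_J card_Aq)

subsection \<open>Distance and supports\<close>

lemma card_Un_add_card_Int_supp:
  "wt n x = w \<Longrightarrow> wt n y = w \<Longrightarrow> card (supp n x \<union> supp n y) + card (supp n x \<inter> supp n y) = 2 * w"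
  by (simp add: wt_def card_Un_Int[symmetric])

lemma hdist_add_card_Int_supp_le:
  assumes "wt n x = w" "wt n y = w"
  shows "hdist n x y + card (supp n x \<inter> supp n y) \<le> 2 * w"
proof -
  have "hdist n x y \<le> card (supp n x \<union> supp n y)"
    unfolding hdist_def by (rule card_mono) (auto simp: supp_def)
  then show ?thesis using card_Un_add_card_Int_supp[OF assms] by linarith
qed

lemma hdist_add_card_Int_supp_eq_of_disagree:
  assumes "wt n x = w" "wt n y = w" "\<forall>i\<in>supp n x \<inter> supp n y. x i \<noteq> y i"
  shows "hdist n x y + card (supp n x \<inter> supp n y) = 2 * w"
proof -
  have "hdist n x y = card (supp n x \<union> supp n y)"
    unfolding hdist_def using assms(3) by (intro arg_cong[where f = card]) (auto simp: supp_def)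
  then show ?thesis using card_Un_add_card_Int_supp[OF assms(1,2)] by simp
qed

lemma binary_word_values: "x \<in> words 2 n \<Longrightarrow> i \<in> {1..n} \<Longrightarrow> x i = 0 \<or> x i = 1"
  by (auto simp: words_def PiE_iff less_2_cases_iff)

lemma hdist_binary:
  assumes "x \<in> words 2 n" "y \<in> words 2 n" "wt n x = w" "wt n y = w"
  shows "hdist n x y + 2 * card (supp n x \<inter> supp n y) = 2 * w"
proof -
  have "x i \<noteq> y i \<longleftrightarrow> (x i \<noteq> 0) \<noteq> (y i \<noteq> 0)" if "i \<in> {1..n}" for i
    using binary_word_values[OF assms(1) that] binary_word_values[OF assms(2) that] by auto
  then have "{i \<in> {1..n}. x i \<noteq> y i} = (supp n x \<union> supp n y) - (supp n x \<inter> supp n y)"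
    by (auto simp: supp_def)
  then have "hdist n x y = card ((supp n x \<union> supp n y) - (supp n x \<inter> supp n y))"
    by (simp add: hdist_def)
  also have "\<dots> = card (supp n x \<union> supp n y) - card (supp n x \<inter> supp n y)"
    by (rule card_Diff_subset) auto
  finally have "hdist n x y = card (supp n x \<union> supp n y) - card (supp n x \<inter> supp n y)" .
  moreover have "card (supp n x \<inter> supp n y) \<le> card (supp n x \<union> supp n y)"
    by (rule card_mono) auto
  ultimately show ?thesis using card_Un_add_card_Int_supp[OF assms(3,4)] by linarith
qed

lemma inj_on_supp_binary: "inj_on (supp n) (words 2 n)"
proof (rule inj_onI, rule ext)
  fix x y i
  assume x: "x \<in> words 2 n" and y: "y \<in> words 2 n" and eq: "supp n x = supp n y"
  show "x i = y i"
  proof (cases "i \<in> {1..n}")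
    case True
    have "i \<in> supp n x \<longleftrightarrow> i \<in> supp n y" using eq by simp
    then have "(x i = 0) = (y i = 0)" using True unfolding supp_def by blast
    then show ?thesis using binary_word_values[OF x True] binary_word_values[OF y True] by auto
  next
    case False
    then show ?thesis
      using PiE_arb[OF x[unfolded words_def] False] PiE_arb[OF y[unfolded words_def] False] by simp
  qed
qed

lemma binarize_in_words: "binarize n x \<in> words 2 n"
  by (simp add: binarize_def words_def restrict_PiE_iff)

lemma supp_binarize [simp]: "supp n (binarize n x) = supp n x"
  by (auto simp: binarize_def supp_def)

lemma s_intersecting_subset_subsets_of_card:
  "s_intersecting n w s T \<Longrightarrow> T \<subseteq> subsets_of_card n w"
  by (auto simp: s_intersecting_def subsets_of_card_def)

lemma s_intersecting_finite: "s_intersecting n w s T \<Longrightarrow> finite T"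
  by (rule finite_subset[OF s_intersecting_subset_subsets_of_card finite_subsets_of_card])

lemma max_s_intersecting_nonempty:
  assumes "s \<le> w" "w \<le> n" "max_s_intersecting n w s T"
  shows "T \<noteq> {}"
proof -
  have "s_intersecting n w s {{1..w}}" using assms(1,2) by (auto simp: s_intersecting_def)
  then have "1 \<le> card T" using assms(3) by (auto simp: max_s_intersecting_def)
  then show ?thesis by auto
qed

lemma card_le_of_max_s_intersecting:
  "max_s_intersecting n w s T \<Longrightarrow> s_intersecting n w s T' \<Longrightarrow> card T' \<le> card T"
  by (simp add: max_s_intersecting_def)

definition s_core :: "nat \<Rightarrow> nat set set \<Rightarrow> nat set set" where
  "s_core s P = {S \<in> P. \<forall>S'\<in>P. s \<le> card (S \<inter> S')}"

lemma s_intersecting_s_core: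
  "P \<subseteq> subsets_of_card n w \<Longrightarrow> s_intersecting n w s (s_core s P)"
  by (auto simp: s_intersecting_def s_core_def subsets_of_card_def)

lemma s_intersecting_insert_s_core:
  assumes "P \<subseteq> subsets_of_card n w" "s \<le> w" "S0 \<in> P"
  shows "s_intersecting n w s (insert S0 (s_core s P))"
  using assms by (auto simp: s_intersecting_def s_core_def subsets_of_card_def Int_commute)

subsection \<open>The anticodes A_q\<close>

lemma anticode_Aq:
  assumes "s_intersecting n w s T" "T \<noteq> {}" "2 \<le> q"
  shows "anticode q n w (2 * w - s) (Aq q n T)"
proof -
  obtain S where "S \<in> T" using assms(2) by blast
  moreover have "words_with_supp q n S \<noteq> {}"
    using \<open>S \<in> T\<close> assms card_words_with_supp[of S n q]
    by (fastforce simp: s_intersecting_def)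
  ultimately have "Aq q n T \<noteq> {}" by (auto simp: Aq_eq_UN)
  moreover have "hdist n x y \<le> 2 * w - s" if "x \<in> Aq q n T" "y \<in> Aq q n T" for x y
    using that assms(1) hdist_add_card_Int_supp_le[of n x w y]
    by (fastforce simp: Aq_def s_intersecting_def wt_def)
  moreover have "Aq q n T \<subseteq> J q n w"
    using assms(1) by (auto simp: Aq_def J_def wt_def s_intersecting_def)
  ultimately show ?thesis by (simp add: anticode_def)
qed

lemma anticode_Aq_binary:
  assumes "s_intersecting n w s T" "T \<noteq> {}"
  shows "anticode 2 n w (2 * w - 2 * s) (Aq 2 n T)"
proof -
  have "hdist n x y \<le> 2 * w - 2 * s" if "x \<in> Aq 2 n T" "y \<in> Aq 2 n T" for x y
    using that assms(1) hdist_binary[of x n y w]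
    by (fastforce simp: Aq_def s_intersecting_def wt_def)
  then show ?thesis using anticode_Aq[OF assms, of 2] by (simp add: anticode_def)
qed

lemma s_intersecting_supp_binary_anticode:
  assumes "s \<le> w" "anticode 2 n w (2 * w - 2 * s) B"
  shows "s_intersecting n w s (supp n ` B)"
proof -
  have "s \<le> card (supp n x \<inter> supp n y)" if "x \<in> B" "y \<in> B" for x y
  proof -
    have "x \<in> J 2 n w" "y \<in> J 2 n w" "hdist n x y \<le> 2 * w - 2 * s"
      using assms(2) that by (auto simp: anticode_def)
    then show ?thesis using hdist_binary[of x n y w] assms(1) by (simp add: J_def)
  qed
  moreover have "supp n x \<subseteq> {1..n} \<and> card (supp n x) = w" if "x \<in> B" for x
    using assms(2) that supp_subset by (auto simp: anticode_def J_def wt_def)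
  ultimately show ?thesis by (auto simp: s_intersecting_def)
qed

lemma max_anticode_Aq_binary:
  assumes "s \<le> w" "w \<le> n" "max_s_intersecting n w s T"
  shows "max_anticode 2 n w (2 * w - 2 * s) (Aq 2 n T)"
proof -
  have T: "s_intersecting n w s T" "T \<noteq> {}"
    using assms max_s_intersecting_nonempty by (auto simp: max_s_intersecting_def)
  have card_Aq_eq: "card (Aq 2 n T) = card T"
    using card_Aq[OF s_intersecting_finite s_intersecting_subset_subsets_of_card, OF T(1) T(1)]
    by simp
  have "card B \<le> card (Aq 2 n T)" if B: "anticode 2 n w (2 * w - 2 * s) B" for B
  proof -
    have "inj_on (supp n) B"
      using inj_on_supp_binary by (rule inj_on_subset) (use B in \<open>auto simp: anticode_def J_def\<close>)
    then have "card B = card (supp n ` B)" by (simp add: card_image)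
    also have "\<dots> \<le> card T"
      using assms(3) s_intersecting_supp_binary_anticode[OF assms(1) B]
      by (rule card_le_of_max_s_intersecting)
    finally show ?thesis using card_Aq_eq by simp
  qed
  then show ?thesis using anticode_Aq_binary[OF T] by (simp add: max_anticode_def)
qed

text \<open>A word with support S that disagrees with y on all of S \<inter> supp y would be at distance
  2w - |S \<inter> supp y| > 2w - s from y.\<close>
lemma card_fibre_le_of_small_Int:
  assumes "s \<le> w" "anticode q n w (2 * w - s) B" "0 < q"
    and "y \<in> B" "S \<subseteq> {1..n}" "card S = w" "card (S \<inter> supp n y) < s"
  shows "card {x \<in> B. supp n x = S} \<le> w * (q-1) ^ (w-1)"
proof -
  have "{x \<in> B. supp n x = S} \<subseteq> {x \<in> words_with_supp q n S. \<exists>i\<in>S. x i = y i}"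
  proof safe
    fix x assume x: "x \<in> B" "S = supp n x"
    have xy: "x \<in> J q n w" "y \<in> J q n w" "hdist n x y \<le> 2 * w - s"
      using assms(2,4) x(1) by (auto simp: anticode_def)
    show "x \<in> words_with_supp q n (supp n x)"
      using xy(1) by (simp add: J_def words_with_supp_def)
    show "\<exists>i\<in>supp n x. x i = y i"
    proof (rule ccontr)
      assume "\<not> ?thesis"
      then have "hdist n x y + card (supp n x \<inter> supp n y) = 2 * w"
        using xy(1,2) by (intro hdist_add_card_Int_supp_eq_of_disagree) (auto simp: J_def)
      moreover have "card (supp n x \<inter> supp n y) < s" using assms(7) x(2) by simp
      ultimately show False using xy(3) assms(1) by linarith
    qed
  qed
  then have "card {x \<in> B. supp n x = S} \<le> card {x \<in> words_with_supp q n S. \<exists>i\<in>S. x i = y i}"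
    by (rule card_mono[rotated]) simp
  also have "\<dots> \<le> w * (q-1) ^ (w-1)"
    using card_words_with_supp_agreeing[OF assms(5,3)] assms(6) by simp
  finally show ?thesis .
qed

lemma supp_image_subset_subsets_of_card: "B \<subseteq> J q n w \<Longrightarrow> supp n ` B \<subseteq> subsets_of_card n w"
  using supp_subset by (auto simp: J_def wt_def subsets_of_card_def)

lemma card_fibre_le:
  assumes "B \<subseteq> words q n" "0 < q" "S \<in> subsets_of_card n w"
  shows "card {x \<in> B. supp n x = S} \<le> (q-1) ^ w"
proof -
  have "card {x \<in> B. supp n x = S} \<le> card (words_with_supp q n S)"
    using assms(1) by (intro card_mono) (auto simp: words_with_supp_def)
  then show ?thesis using assms(2,3) by (simp add: subsets_of_card_def card_words_with_supp)
qed

lemma sum_fibres_outside_s_core_le: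
  assumes "s \<le> w" "anticode q n w (2 * w - s) B" "card (subsets_of_card n w) * w < q"
  defines "P \<equiv> supp n ` B"
  shows "(\<Sum>S\<in>P - s_core s P. card {x \<in> B. supp n x = S}) \<le> (q-1) ^ w"
proof (cases "P - s_core s P = {}")
  case True
  then show ?thesis by (simp only: sum.empty)
next
  case False
  have PJ: "P \<subseteq> subsets_of_card n w"
    unfolding P_def using assms by (intro supp_image_subset_subsets_of_card[where q = q]) (simp add: anticode_def)
  have fibre: "card {x \<in> B. supp n x = S} \<le> w * (q-1) ^ (w-1)" if S: "S \<in> P - s_core s P" for S
  proof -
    obtain y where "y \<in> B" "card (S \<inter> supp n y) < s"
      using S by (auto simp: P_def s_core_def not_le)
    then show ?thesis
      using S PJ assms(1-3)
      by (intro card_fibre_le_of_small_Int[where s = s]) (auto simp: subsets_of_card_def)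
  qed
  have "1 \<le> w" using False assms(1) by (auto simp: s_core_def)
  have "(\<Sum>S\<in>P - s_core s P. card {x \<in> B. supp n x = S})
      \<le> (\<Sum>S\<in>P - s_core s P. w * (q-1) ^ (w-1))"
    by (rule sum_mono) (rule fibre)
  also have "\<dots> = card (P - s_core s P) * w * (q-1) ^ (w-1)"
    by simp
  also have "\<dots> \<le> card (subsets_of_card n w) * w * (q-1) ^ (w-1)"
    using PJ by (intro mult_right_mono card_mono) auto
  also have "\<dots> \<le> (q-1) * (q-1) ^ (w-1)"
    using assms(3) by (intro mult_right_mono) auto
  also have "\<dots> = (q-1) ^ w"
    using \<open>1 \<le> w\<close> by (simp add: power_eq_if)
  finally show ?thesis .
qed

lemma card_s_core_mul_add_sum_fibres_le:
  assumes "s \<le> w" "max_s_intersecting n w s T"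
    and q: "card (subsets_of_card n w) * w < q" and B: "anticode q n w (2 * w - s) B"
  defines "P \<equiv> supp n ` B"
  shows "card (s_core s P) * (q-1) ^ w + (\<Sum>S\<in>P - s_core s P. card {x \<in> B. supp n x = S})
    \<le> card T * (q-1) ^ w"
proof -
  have PJ: "P \<subseteq> subsets_of_card n w"
    unfolding P_def using B by (intro supp_image_subset_subsets_of_card[where q = q]) (simp add: anticode_def)
  show ?thesis
  proof (cases "P \<subseteq> s_core s P")
    case True
    then have "P - s_core s P = {}" by blast
    moreover have "card (s_core s P) \<le> card T"
      using assms(2) s_intersecting_s_core[OF PJ] by (rule card_le_of_max_s_intersecting)
    ultimately show ?thesis by (simp only: sum.empty add_0_right mult_right_mono)
  next
    case False
    then obtain S0 where "S0 \<in> P" "S0 \<notin> s_core s P" by blast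
    have "finite (s_core s P)"
      using finite_subset[OF PJ finite_subsets_of_card]
      by (rule finite_subset[rotated]) (auto simp: s_core_def)
    then have "card (s_core s P) + 1 = card (insert S0 (s_core s P))"
      using \<open>S0 \<notin> s_core s P\<close> by simp
    also have "\<dots> \<le> card T"
      using assms(2) s_intersecting_insert_s_core[OF PJ assms(1) \<open>S0 \<in> P\<close>]
      by (rule card_le_of_max_s_intersecting)
    finally have "(card (s_core s P) + 1) * (q-1) ^ w \<le> card T * (q-1) ^ w"
      by (rule mult_right_mono) simp
    then show ?thesis
      using sum_fibres_outside_s_core_le[OF assms(1) B q] by (simp add: P_def)
  qed
qed

lemma card_le_sum_card_fibres:
  assumes "finite B"
  shows "card B \<le> (\<Sum>S\<in>f ` B. card {x \<in> B. f x = S})"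
proof -
  have "card B = card (\<Union>S\<in>f ` B. {x \<in> B. f x = S})"
    by (rule arg_cong[where f = card]) blast
  also have "\<dots> \<le> (\<Sum>S\<in>f ` B. card {x \<in> B. f x = S})"
    using assms by (intro card_UN_le) simp
  finally show ?thesis .
qed

lemma card_anticode_le_card_Aq:
  assumes "s \<le> w" "w \<le> n" "max_s_intersecting n w s T"
    and q: "card (subsets_of_card n w) * w < q" and B: "anticode q n w (2 * w - s) B"
  shows "card B \<le> card (Aq q n T)"
proof -
  define P where "P = supp n ` B"
  define fibre where "fibre S = card {x \<in> B. supp n x = S}" for S
  have B_words: "B \<subseteq> words q n" using B by (auto simp: anticode_def J_def)
  have PJ: "P \<subseteq> subsets_of_card n w"
    unfolding P_def using assms by (intro supp_image_subset_subsets_of_card[where q = q]) (simp add: anticode_def)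
  have "card B \<le> (\<Sum>S\<in>P. fibre S)"
    using card_le_sum_card_fibres[OF finite_subset[OF B_words finite_words]]
    by (simp add: P_def fibre_def)
  also have "\<dots> = (\<Sum>S\<in>P - s_core s P. fibre S) + (\<Sum>S\<in>s_core s P. fibre S)"
    using finite_subset[OF PJ finite_subsets_of_card]
    by (rule sum.subset_diff[rotated]) (auto simp: s_core_def)
  also have "(\<Sum>S\<in>s_core s P. fibre S) \<le> card (s_core s P) * (q-1) ^ w"
    using sum_mono[of "s_core s P" fibre "\<lambda>_. (q-1) ^ w"] card_fibre_le[OF B_words] PJ q
    by (force simp: s_core_def fibre_def)
  also have "(\<Sum>S\<in>P - s_core s P. fibre S) + card (s_core s P) * (q-1) ^ w \<le> card T * (q-1) ^ w"
    using card_s_core_mul_add_sum_fibres_le[OF assms(1,3) q B] by (simp add: P_def fibre_def)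
  also have "\<dots> = card (Aq q n T)"
    using assms(3) q
    by (intro card_Aq[symmetric] s_intersecting_finite s_intersecting_subset_subsets_of_card)
      (auto simp: max_s_intersecting_def)
  finally show ?thesis by simp
qed

subsection \<open>Binarizing diameter perfect codes\<close>

lemma card_Int_supp_less_of_code:
  assumes "code q n w (2 * w - s + 1) C" "x \<in> C" "y \<in> C" "x \<noteq> y"
  shows "card (supp n x \<inter> supp n y) < s"
proof -
  have "x \<in> J q n w" "y \<in> J q n w" "2 * w - s + 1 \<le> hdist n x y"
    using assms by (auto simp: code_def)
  then show ?thesis using hdist_add_card_Int_supp_le[of n x w y] by (simp add: J_def)
qed

lemma inj_on_binarize_code:
  assumes "s \<le> w" "code q n w (2 * w - s + 1) C"
  shows "inj_on (binarize n) C"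
proof (rule inj_onI, rule ccontr)
  fix x y assume "x \<in> C" "y \<in> C" "binarize n x = binarize n y" "x \<noteq> y"
  moreover have "wt n x = w" using assms(2) \<open>x \<in> C\<close> by (auto simp: code_def J_def)
  ultimately show False
    using card_Int_supp_less_of_code[OF assms(2)] assms(1) supp_binarize
    by (metis Int_absorb not_le wt_def)
qed

lemma code_binarize:
  assumes "s \<le> w" "code q n w (2 * w - s + 1) C"
  shows "code 2 n w (2 * w - 2 * s + 2) (binarize n ` C)"
proof -
  have CJ: "\<And>x. x \<in> C \<Longrightarrow> wt n x = w" using assms(2) by (auto simp: code_def J_def)
  have "2 * w - 2 * s + 2 \<le> hdist n (binarize n x) (binarize n y)"
    if "x \<in> C" "y \<in> C" "binarize n x \<noteq> binarize n y" for x y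
  proof -
    have "card (supp n x \<inter> supp n y) < s"
      using card_Int_supp_less_of_code[OF assms(2) that(1,2)] that(3) by blast
    moreover have "hdist n (binarize n x) (binarize n y) + 2 * card (supp n x \<inter> supp n y) = 2 * w"
      using hdist_binary[OF binarize_in_words binarize_in_words, of n x w y] CJ that(1,2)
      by (simp add: wt_def)
    ultimately show ?thesis using assms(1) by linarith
  qed
  moreover have "card (binarize n ` C) = card C"
    by (rule card_image[OF inj_on_binarize_code[OF assms]])
  ultimately show ?thesis
    using assms(2) CJ binarize_in_words by (auto simp: code_def J_def wt_def)
qed

lemma diameter_perfect_of_card_eq:
  assumes "code q n w d C" "anticode q n w D A" "D < d"
    and "real (card C) = real (card (J q n w)) / real (card A)"
  shows "diameter_perfect q n w d C"
proof -
  have "finite A" "A \<noteq> {}"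
    using assms(2) finite_words by (auto simp: anticode_def J_def intro: finite_subset)
  then have "card C * card A = card (J q n w)"
    using assms(4) by (simp add: field_simps flip: of_nat_mult)
  then show ?thesis using assms(1-3) by (auto simp: diameter_perfect_def)
qed

lemma max_anticode_Aq:
  assumes "s \<le> w" "w \<le> n" "max_s_intersecting n w s T"
    and "2 \<le> q" "card (subsets_of_card n w) * w < q"
  shows "max_anticode q n w (2 * w - s) (Aq q n T)"
proof -
  have "s_intersecting n w s T" using assms(3) by (simp add: max_s_intersecting_def)
  then show ?thesis
    using anticode_Aq max_s_intersecting_nonempty[OF assms(1-3)] assms(4)
      card_anticode_le_card_Aq[OF assms(1-3,5)]
    by (simp add: max_anticode_def)
qed

lemma binarize_diameter_perfect_code:
  assumes "s \<le> w" "w \<le> n" "max_s_intersecting n w s T"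
    and q: "2 \<le> q" and C: "code q n w (2 * w - s + 1) C"
    and card_C: "real (card C) = real (card (J q n w)) / real (card (Aq q n T))"
  shows "real (card (binarize n ` C)) = real (card (J 2 n w)) / real (card (Aq 2 n T))"
    and "code 2 n w (2 * w - 2 * s + 2) (binarize n ` C)"
    and "diameter_perfect 2 n w (2 * w - 2 * s + 2) (binarize n ` C)"
proof -
  have T: "s_intersecting n w s T" using assms(3) by (simp add: max_s_intersecting_def)
  have T_props: "finite T" "T \<subseteq> subsets_of_card n w"
    using s_intersecting_finite[OF T] s_intersecting_subset_subsets_of_card[OF T] by auto
  show card_C2: "real (card (binarize n ` C)) = real (card (J 2 n w)) / real (card (Aq 2 n T))"
    using card_C card_image[OF inj_on_binarize_code[OF assms(1) C]]
      card_J_div_card_Aq[OF T_props q] card_J_div_card_Aq[OF T_props, of 2] by simp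
  show code2: "code 2 n w (2 * w - 2 * s + 2) (binarize n ` C)"
    by (rule code_binarize[OF assms(1) C])
  show "diameter_perfect 2 n w (2 * w - 2 * s + 2) (binarize n ` C)"
    using anticode_Aq_binary[OF T max_s_intersecting_nonempty[OF assms(1-3)]]
    by (intro diameter_perfect_of_card_eq[OF code2 _ _ card_C2]) auto
qed

theorem mainTheorem5:
  fixes n w s :: nat and T :: "nat set set"
  assumes "s \<le> w" and "w \<le> n"
    and "max_s_intersecting n w s T"
  shows "max_anticode 2 n w (2*w - 2*s) (Aq 2 n T)
     \<and> (\<exists>Q. \<forall>q\<ge>Q. max_anticode q n w (2*w - s) (Aq q n T))
     \<and> (\<forall>q C. 2 \<le> q \<longrightarrow> code q n w (2*w - s + 1) C \<longrightarrow>
           real (card C) = real (card (J q n w)) / real (card (Aq q n T)) \<longrightarrow>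
           real (card (binarize n ` C)) = real (card (J 2 n w)) / real (card (Aq 2 n T))
           \<and> code 2 n w (2*w - 2*s + 2) (binarize n ` C)
           \<and> diameter_perfect 2 n w (2*w - 2*s + 2) (binarize n ` C))"
proof -
  have "max_anticode q n w (2*w - s) (Aq q n T)"
    if "card (subsets_of_card n w) * w + 2 \<le> q" for q
    using that by (intro max_anticode_Aq[OF assms]) auto
  then show ?thesis
    using max_anticode_Aq_binary[OF assms] binarize_diameter_perfect_code[OF assms] by blast
qed

end
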